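(* Let $G$ be a finitely generated group. Then every sequence of almost-invariant probability measures on $G$ measures index uniformly.
   Context: A sequence $(\mu_n)$ of probability measures on $G$ is almost-invariant if $\|x\cdot\mu_n-\mu_n\|_1\to0$ for every $x\in G$, where $x\cdot\mu(A)=\mu(x^{-1}A)$. It measures index uniformly if $\mu_n(xH)\to1/[G:H]$ uniformly over all $x\in G$ and all subgroups $H$ of $G$, with the convention $1/[G:H]=0$ when $H$ has infinite index. *)

theory Defs
  imports "HOL-Algebra.Algebra" "HOL-Probability.Probability"
begin

definition fin_gen_group :: "('a, 'b) monoid_scheme \<Rightarrow> bool" where
  "fin_gen_group G \<longleftrightarrow> group G \<and>
     (\<exists>S. finite S \<and> S \<subseteq> carrier G \<and> generate G S = carrier G)"

text \<open>Probability measures on the (countable, discrete) group G: pmfs supported in carrier G.\<close>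
definition prob_on :: "('a, 'b) monoid_scheme \<Rightarrow> 'a pmf \<Rightarrow> bool" where
  "prob_on G \<mu> \<longleftrightarrow> set_pmf \<mu> \<subseteq> carrier G"

text \<open>The l1-distance between the translate x.mu (with (x.mu)(A) = mu(x^-1 A)) and mu.\<close>
definition transl_dist :: "('a, 'b) monoid_scheme \<Rightarrow> 'a \<Rightarrow> 'a pmf \<Rightarrow> real" where
  "transl_dist G x \<mu> =
     (\<Sum>\<^sub>\<infinity> g\<in>carrier G. \<bar>pmf \<mu> (inv\<^bsub>G\<^esub> x \<otimes>\<^bsub>G\<^esub> g) - pmf \<mu> g\<bar>)"

definition almost_invariant :: "('a, 'b) monoid_scheme \<Rightarrow> (nat \<Rightarrow> 'a pmf) \<Rightarrow> bool" where
  "almost_invariant G \<mu> \<longleftrightarrow>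
     (\<forall>x\<in>carrier G. (\<lambda>n. transl_dist G x (\<mu> n)) \<longlonglongrightarrow> 0)"

text \<open>1/[G:H], with the convention that it is 0 when H has infinite index.\<close>
definition inv_index :: "('a, 'b) monoid_scheme \<Rightarrow> 'a set \<Rightarrow> real" where
  "inv_index G H = (if finite (rcosets\<^bsub>G\<^esub> H) then 1 / real (card (rcosets\<^bsub>G\<^esub> H)) else 0)"

definition measures_index_uniformly :: "('a, 'b) monoid_scheme \<Rightarrow> (nat \<Rightarrow> 'a pmf) \<Rightarrow> bool" where
  "measures_index_uniformly G \<mu> \<longleftrightarrow>
     (\<forall>\<epsilon>>0. \<exists>N. \<forall>n\<ge>N. \<forall>x\<in>carrier G. \<forall>H. subgroup H G \<longrightarrow>
        \<bar>measure_pmf.prob (\<mu> n) (x <#\<^bsub>G\<^esub> H) - inv_index G H\<bar> < \<epsilon>)"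

end

theory Submission
  imports Defs
begin

(*
  Fix a finite symmetric generating set T of G and a left coset xH. The cosets reachable
  from xH by at most r left translations by elements of T form a ball in the Schreier graph
  of G acting on the left cosets of H. For large n, a translation by a generator changes the
  mu_n-measure of a set by at most delta, so every coset in the ball has measure within
  r * delta of mu_n(xH). The ball grows strictly until it contains every coset. If it already
  does, its cosets partition G, so their measures add up to 1 and mu_n(xH) is close to
  1/[G:H]. Otherwise it contains at least r + 1 disjoint cosets, so mu_n(xH) and 1/[G:H]
  are both at most about 1/(r + 1). None of these bounds depends on x or H.
*)

lemma summable_on_pmf: "pmf p summable_on A"
  using abs_summable_equivalent pmf_abs_summable summable_on_iff_abs_summable_on_real by blast

lemma measure_pmf_conv_infsum: "measure_pmf.prob p A = infsum (pmf p) A"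
  by (simp add: measure_pmf_conv_infsetsum infsetsum_infsum pmf_abs_summable)

lemma (in group) prob_l_coset_diff_le_transl_dist:
  assumes y: "y \<in> carrier G" and A: "A \<subseteq> carrier G"
  shows "\<bar>measure_pmf.prob \<mu> (inv y <# A) - measure_pmf.prob \<mu> A\<bar> \<le> transl_dist G y \<mu>"
proof -
  define f where "f a = pmf \<mu> (inv y \<otimes> a) - pmf \<mu> a" for a
  have inj: "inj_on ((\<otimes>) (inv y)) (carrier G)"
    using y by (simp add: inj_on_cmult)
  have translate_summable: "(\<lambda>a. pmf \<mu> (inv y \<otimes> a)) summable_on B" if "B \<subseteq> carrier G" for B
    using summable_on_reindex[OF inj_on_subset[OF inj that], of "pmf \<mu>"]
      summable_on_pmf[of \<mu> "(\<otimes>) (inv y) ` B"]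
    by (simp add: comp_def)
  have f_summable: "f summable_on B" if "B \<subseteq> carrier G" for B
    unfolding f_def
    using summable_on_add[OF translate_summable[OF that] summable_on_uminus[THEN iffD2, OF summable_on_pmf]]
    by simp
  have abs_f_summable: "(\<lambda>a. \<bar>f a\<bar>) summable_on B" if "B \<subseteq> carrier G" for B
    using summable_on_iff_abs_summable_on_real[THEN iffD1, OF f_summable[OF that]] by simp
  have "inv y <# A = (\<otimes>) (inv y) ` A"
    unfolding l_coset_def by auto
  then have "measure_pmf.prob \<mu> (inv y <# A) = infsum (\<lambda>a. pmf \<mu> (inv y \<otimes> a)) A"
    using infsum_reindex[OF inj_on_subset[OF inj A], of "pmf \<mu>"]
    by (simp add: measure_pmf_conv_infsum comp_def)
  then have "measure_pmf.prob \<mu> (inv y <# A) - measure_pmf.prob \<mu> A = infsum f A"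
    unfolding f_def measure_pmf_conv_infsum
    using infsum_add[OF translate_summable[OF A] summable_on_uminus[THEN iffD2, OF summable_on_pmf]]
    by (simp add: infsum_uminus)
  also have "\<bar>infsum f A\<bar> \<le> infsum (\<lambda>a. \<bar>f a\<bar>) A"
    using norm_infsum_bound[of f A] abs_f_summable[OF A] by simp
  also have "\<dots> \<le> infsum (\<lambda>a. \<bar>f a\<bar>) (carrier G)"
    using A abs_f_summable[OF A] abs_f_summable[of "carrier G"] by (intro infsum_mono2) auto
  also have "\<dots> = transl_dist G y \<mu>"
    unfolding transl_dist_def f_def by simp
  finally show ?thesis .
qed

lemma sum_close_eq_one_imp_close_inverse_card:
  fixes p :: "'a \<Rightarrow> real"
  assumes "finite I" "I \<noteq> {}" "sum p I = 1" "\<And>i. i \<in> I \<Longrightarrow> \<bar>p i - a\<bar> \<le> \<eta>"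
  shows "\<bar>a - 1 / card I\<bar> \<le> \<eta>"
proof -
  have pos: "0 < real (card I)"
    using assms(1,2) by (simp add: card_gt_0_iff)
  have "\<bar>1 - card I * a\<bar> = \<bar>\<Sum>i\<in>I. p i - a\<bar>"
    using assms(3) by (simp add: sum_subtractf)
  also have "\<dots> \<le> (\<Sum>i\<in>I. \<bar>p i - a\<bar>)"
    by (rule sum_abs)
  also have "\<dots> \<le> card I * \<eta>"
    using sum_bounded_above[of I "\<lambda>i. \<bar>p i - a\<bar>" \<eta>] assms(4) by simp
  finally show ?thesis
    using pos by (simp add: field_simps abs_le_iff)
qed

lemma sum_le_one_imp_le_inverse_card:
  fixes p :: "'a \<Rightarrow> real"
  assumes "sum p I \<le> 1" "\<And>i. i \<in> I \<Longrightarrow> \<bar>p i - a\<bar> \<le> \<eta>" "0 < n" "n \<le> card I"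
  shows "a \<le> 1 / n + \<eta>"
proof (cases "a - \<eta> \<le> 0")
  case False
  have "card I * (a - \<eta>) \<le> sum p I"
    using sum_bounded_below[of I "a - \<eta>" p] assms(2) by (fastforce simp: abs_le_iff)
  moreover have "n * (a - \<eta>) \<le> card I * (a - \<eta>)"
    using False assms(4) by (intro mult_right_mono) auto
  ultimately have "n * (a - \<eta>) \<le> 1"
    using assms(1) by linarith
  then show ?thesis
    using assms(3) by (simp add: field_simps)
next
  case True
  have "0 \<le> 1 / real n"
    by simp
  then show ?thesis
    using True by linarith
qed

lemma ex_inverse_Suc_plus_mult_less:
  fixes \<epsilon> :: real
  assumes "0 < \<epsilon>"
  shows "\<exists>r \<delta>. 0 < \<delta> \<and> 1 / Suc r + r * \<delta> < \<epsilon>"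
proof -
  obtain r where "inverse (real (Suc r)) < \<epsilon> / 2"
    using reals_Archimedean half_gt_zero assms by blast
  then have r: "1 / Suc r < \<epsilon> / 2"
    by (simp add: inverse_eq_divide)
  define \<delta> where "\<delta> = \<epsilon> / (2 * Suc r)"
  have "r * \<delta> = \<epsilon> / 2 * (r / Suc r)"
    by (simp add: \<delta>_def)
  also have "\<dots> < \<epsilon> / 2 * 1"
    using assms by (intro mult_strict_left_mono) auto
  finally have "1 / Suc r + r * \<delta> < \<epsilon>"
    using r by linarith
  moreover have "0 < \<delta>"
    using assms by (simp add: \<delta>_def)
  ultimately show ?thesis
    by blast
qed

lemma incseq_eq_Union_or_card_ge:
  fixes C :: "nat \<Rightarrow> 'a set"
  assumes inc: "incseq C" and "C 0 \<noteq> {}" and fin: "\<And>k. finite (C k)"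
    and stationary: "\<And>k. C (Suc k) = C k \<Longrightarrow> C (Suc (Suc k)) = C (Suc k)"
  shows "C k = (\<Union>m. C m) \<or> Suc k \<le> card (C k)"
proof (induction k)
  case 0
  then show ?case
    using \<open>C 0 \<noteq> {}\<close> fin[of 0] by (simp add: Suc_le_eq card_gt_0_iff)
next
  case (Suc k)
  show ?case
  proof (cases "C (Suc k) = C k")
    case True
    have "C (Suc (k + j)) = C (k + j)" for j
      by (induction j) (use True stationary in auto)
    then have "C (k + j) = C k" for j
      by (induction j) auto
    then have "C m \<subseteq> C k" for m
      using inc by (metis le_add2 incseqD)
    then show ?thesis
      using True by blast
  next
    case False
    then have "C k \<subset> C (Suc k)"
      using inc by (simp add: incseq_Suc_iff psubset_eq)
    then have "card (C k) < card (C (Suc k))"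
      using fin psubset_card_mono by blast
    moreover have "C k \<noteq> (\<Union>m. C m)"
      using \<open>C k \<subset> C (Suc k)\<close> by blast
    ultimately show ?thesis
      using Suc.IH by simp
  qed
qed

primrec coset_ball :: "('a, 'b) monoid_scheme \<Rightarrow> 'a set \<Rightarrow> 'a set \<Rightarrow> nat \<Rightarrow> 'a set set" where
  "coset_ball G T C 0 = {C}"
| "coset_ball G T C (Suc k) =
     coset_ball G T C k \<union> (\<lambda>(t, D). t <#\<^bsub>G\<^esub> D) ` (T \<times> coset_ball G T C k)"

lemma finite_coset_ball: "finite T \<Longrightarrow> finite (coset_ball G T C k)"
  by (induction k) auto

lemma coset_ball_mono: "k \<le> m \<Longrightarrow> coset_ball G T C k \<subseteq> coset_ball G T C m"
  by (induction m) (auto simp: le_Suc_eq)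

lemma (in group) coset_ball_subset_lcosets:
  assumes "T \<subseteq> carrier G" "subgroup H G" "C \<in> lcosets H"
  shows "coset_ball G T C k \<subseteq> lcosets H"
proof (induction k)
  case (Suc k)
  have "t <# (y <# H) \<in> lcosets H" if "t \<in> T" "y \<in> carrier G" for t y
  proof -
    have "t \<in> carrier G"
      using that assms(1) by blast
    then show ?thesis
      using that lcos_m_assoc[OF subgroup.subset[OF assms(2)]] by (auto simp: LCOSETS_def)
  qed
  then show ?case
    using Suc by (auto simp: LCOSETS_def)
qed (use assms in simp)

lemma (in group) coset_ball_subset_carrier:
  assumes "T \<subseteq> carrier G" "C \<subseteq> carrier G" "D \<in> coset_ball G T C k"
  shows "D \<subseteq> carrier G"
  using assms(3)
proof (induction k arbitrary: D)
  case (Suc k)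
  have "t <# E \<subseteq> carrier G" if "t \<in> T" "E \<in> coset_ball G T C k" for t E
    using that assms(1) Suc.IH l_coset_subset_G by blast
  then show ?case
    using Suc.prems Suc.IH by fastforce
qed (use assms(2) in simp)

lemma (in group) inv_image_l_coset:
  assumes H: "subgroup H G" and y: "y \<in> carrier G"
  shows "m_inv G ` (y <# H) = H #> inv y"
proof
  show "m_inv G ` (y <# H) \<subseteq> H #> inv y"
    using H y by (auto simp: l_coset_def r_coset_def inv_mult_group subgroup.mem_carrier
        intro: subgroup.m_inv_closed)
  show "H #> inv y \<subseteq> m_inv G ` (y <# H)"
  proof
    fix z assume "z \<in> H #> inv y"
    then obtain h where h: "h \<in> H" and z: "z = h \<otimes> inv y"
      by (auto simp: r_coset_def)
    have "inv h \<in> H" "h \<in> carrier G"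
      using H h by (auto intro: subgroup.m_inv_closed subgroup.mem_carrier)
    then have "z = inv (y \<otimes> inv h)" "y \<otimes> inv h \<in> y <# H"
      using y z by (auto simp: inv_mult_group l_coset_def)
    then show "z \<in> m_inv G ` (y <# H)"
      by blast
  qed
qed

lemma (in group) bij_betw_lcosets_rcosets:
  assumes "subgroup H G"
  shows "bij_betw (\<lambda>C. m_inv G ` C) (lcosets H) (rcosets H)"
proof (rule bij_betwI')
  fix C D assume "C \<in> lcosets H" "D \<in> lcosets H"
  then have "C \<subseteq> carrier G" "D \<subseteq> carrier G"
    using assms subgroup.lcosets_carrier is_group by blast+
  moreover have "m_inv G ` m_inv G ` E = E" if "E \<subseteq> carrier G" for E
    using that by (force simp: image_image)
  ultimately show "(m_inv G ` C = m_inv G ` D) = (C = D)"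
    by metis
next
  fix C assume "C \<in> lcosets H"
  then show "m_inv G ` C \<in> rcosets H"
    using inv_image_l_coset[OF assms] by (auto simp: LCOSETS_def RCOSETS_def)
next
  fix D assume "D \<in> rcosets H"
  then obtain z where "z \<in> carrier G" "D = H #> z"
    by (auto simp: RCOSETS_def)
  then show "\<exists>C\<in>lcosets H. D = m_inv G ` C"
    using inv_image_l_coset[OF assms, of "inv z"] by (auto simp: LCOSETS_def)
qed

lemma (in group) inv_index_eq:
  assumes "subgroup H G"
  shows "inv_index G H = (if finite (lcosets H) then 1 / card (lcosets H) else 0)"
  using bij_betw_finite[OF bij_betw_lcosets_rcosets[OF assms]]
    bij_betw_same_card[OF bij_betw_lcosets_rcosets[OF assms]]
  by (simp add: inv_index_def)

lemma (in group) sum_prob_lcosets: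
  assumes "subgroup H G" "finite \<C>" "\<C> \<subseteq> lcosets H"
  shows "(\<Sum>C\<in>\<C>. measure_pmf.prob \<mu> C) = measure_pmf.prob \<mu> (\<Union>\<C>)"
proof -
  have "disjoint_family_on id \<C>"
    unfolding disjoint_family_on_def id_def using assms(3) lcos_disjoint[OF assms(1)] by blast
  then show ?thesis
    using measure_pmf.finite_measure_finite_Union[OF assms(2), of id] by simp
qed

lemma (in group) inv_index_close_if_lcosets_close:
  assumes H: "subgroup H G" and supp: "set_pmf \<mu> \<subseteq> carrier G" and "finite (lcosets H)"
    and close: "\<And>D. D \<in> lcosets H \<Longrightarrow> \<bar>measure_pmf.prob \<mu> D - a\<bar> \<le> \<eta>"
  shows "\<bar>a - inv_index G H\<bar> \<le> \<eta>"
proof -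
  have "(\<Sum>D\<in>lcosets H. measure_pmf.prob \<mu> D) = measure_pmf.prob \<mu> (carrier G)"
    using sum_prob_lcosets[OF H \<open>finite (lcosets H)\<close>] lcosets_part_G[OF H] by simp
  also have "\<dots> = 1"
    using supp by (subst measure_pmf.prob_eq_1) (auto simp: AE_measure_pmf_iff)
  finally have "\<bar>a - 1 / card (lcosets H)\<bar> \<le> \<eta>"
    using sum_close_eq_one_imp_close_inverse_card[of "lcosets H"] close \<open>finite (lcosets H)\<close>
      lcosets_part_G[OF H] by fastforce
  then show ?thesis
    using inv_index_eq[OF H] \<open>finite (lcosets H)\<close> by simp
qed

lemma (in group) inv_index_close_if_many_lcosets_close:
  assumes H: "subgroup H G" and "finite \<C>" "\<C> \<subseteq> lcosets H" "Suc r \<le> card \<C>"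
    and close: "\<And>D. D \<in> \<C> \<Longrightarrow> \<bar>measure_pmf.prob \<mu> D - a\<bar> \<le> \<eta>" and "0 \<le> a" "0 \<le> \<eta>"
  shows "\<bar>a - inv_index G H\<bar> \<le> 1 / Suc r + \<eta>"
proof -
  have "a \<le> 1 / Suc r + \<eta>"
    using sum_le_one_imp_le_inverse_card[where I = \<C> and p = "measure_pmf.prob \<mu>" and n = "Suc r"]
      assms(4) close sum_prob_lcosets[OF assms(1-3)] measure_pmf.prob_le_1
    by simp
  moreover have "inv_index G H \<le> 1 / Suc r"
  proof (cases "finite (lcosets H)")
    case True
    then have "card \<C> \<le> card (lcosets H)"
      using assms(3) by (rule card_mono)
    then show ?thesis
      using True assms(4) inv_index_eq[OF H] by (simp add: frac_le)
  qed (simp add: inv_index_eq[OF H])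
  moreover have "0 \<le> inv_index G H"
    by (simp add: inv_index_def)
  ultimately show ?thesis
    unfolding abs_le_iff using assms(6,7) by (intro conjI; linarith)
qed

lemma (in group) prob_coset_ball_close:
  assumes T: "T \<subseteq> carrier G" "m_inv G ` T \<subseteq> T"
    and small: "\<And>t. t \<in> T \<Longrightarrow> transl_dist G t \<mu> \<le> \<delta>" and "0 \<le> \<delta>"
    and C: "C \<subseteq> carrier G"
  shows "D \<in> coset_ball G T C k \<Longrightarrow>
    \<bar>measure_pmf.prob \<mu> D - measure_pmf.prob \<mu> C\<bar> \<le> k * \<delta>"
proof (induction k arbitrary: D)
  case (Suc k)
  have step: "\<bar>measure_pmf.prob \<mu> (t <# E) - measure_pmf.prob \<mu> E\<bar> \<le> \<delta>"
    if "t \<in> T" "E \<in> coset_ball G T C k" for t E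
  proof -
    have "t \<in> carrier G" "inv t \<in> T"
      using that T by auto
    moreover have "E \<subseteq> carrier G"
      using coset_ball_subset_carrier[OF T(1) C that(2)] .
    ultimately show ?thesis
      using prob_l_coset_diff_le_transl_dist[of "inv t" E \<mu>] small[of "inv t"] by simp
  qed
  from Suc.prems consider "D \<in> coset_ball G T C k"
    | t E where "t \<in> T" "E \<in> coset_ball G T C k" "D = t <# E"
    by (auto simp del: coset_ball.simps(1))
  then show ?case
  proof cases
    case 1
    then show ?thesis
      using Suc.IH[of D] \<open>0 \<le> \<delta>\<close> by (simp add: distrib_right)
  next
    case 2
    then show ?thesis
      using Suc.IH[of E] step[of t E] by (simp add: distrib_right abs_le_iff)
  qed
qed simp

locale finite_symmetric_generators = group G for G :: "('a, 'b) monoid_scheme" (structure) +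
  fixes T :: "'a set"
  assumes gens_subset: "T \<subseteq> carrier G"
    and finite_gens: "finite T"
    and inv_gens_subset: "m_inv G ` T \<subseteq> T"
    and generate_gens: "generate G T = carrier G"

lemma (in group) finite_symmetric_generators_symmetrize:
  assumes "finite S" "S \<subseteq> carrier G" "generate G S = carrier G"
  shows "finite_symmetric_generators G (S \<union> m_inv G ` S)"
proof
  show "S \<union> m_inv G ` S \<subseteq> carrier G" "finite (S \<union> m_inv G ` S)"
    using assms(1,2) by auto
  show "m_inv G ` (S \<union> m_inv G ` S) \<subseteq> S \<union> m_inv G ` S"
    using assms(2) by (auto simp: subsetD)
  have "generate G S \<subseteq> generate G (S \<union> m_inv G ` S)"
    by (rule mono_generate) blast
  then show "generate G (S \<union> m_inv G ` S) = carrier G"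
    using assms(3) generate_incl[OF \<open>S \<union> m_inv G ` S \<subseteq> carrier G\<close>] by blast
qed

context finite_symmetric_generators
begin

lemma lcosets_subset_UN_coset_ball:
  assumes H: "subgroup H G" and C: "C \<in> lcosets H"
  shows "lcosets H \<subseteq> (\<Union>k. coset_ball G T C k)"
proof -
  let ?U = "\<Union>k. coset_ball G T C k"
  have U_carrier: "D \<subseteq> carrier G" if "D \<in> ?U" for D
    using that coset_ball_subset_lcosets[OF gens_subset H C] subgroup.lcosets_carrier[OF H is_group]
    by blast
  have translate: "t <# D \<in> ?U" if t: "t \<in> T" and D: "D \<in> ?U" for t D
  proof -
    obtain k where "D \<in> coset_ball G T C k"
      using D by blast
    then have "t <# D \<in> coset_ball G T C (Suc k)"
      using t by (auto simp: image_iff)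
    then show ?thesis
      by blast
  qed
  have closed: "g <# D \<in> ?U" if "g \<in> generate G T" "D \<in> ?U" for g D
    using that
  proof (induction arbitrary: D rule: generate.induct)
    case one
    then show ?case
      using U_carrier lcos_mult_one by simp
  next
    case (incl h)
    then show ?case
      using translate by blast
  next
    case (inv h)
    then show ?case
      using translate inv_gens_subset by blast
  next
    case (eng h1 h2)
    have "h1 \<in> carrier G" "h2 \<in> carrier G"
      using eng.hyps generate_gens by auto
    then have "(h1 \<otimes> h2) <# D = h1 <# (h2 <# D)"
      using lcos_m_assoc[OF U_carrier[OF eng.prems]] by simp
    then show ?case
      using eng.IH eng.prems by simp
  qed
  show ?thesis
  proof
    fix E assume "E \<in> lcosets H"
    then obtain x y where xy: "x \<in> carrier G" "y \<in> carrier G" "C = x <# H" "E = y <# H"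
      using C by (auto simp: LCOSETS_def)
    then have "E = (y \<otimes> inv x) <# C"
      using lcos_m_assoc[OF subgroup.subset[OF H]] by (simp add: m_assoc)
    moreover have "C \<in> ?U"
      using coset_ball.simps(1) by blast
    ultimately show "E \<in> ?U"
      using closed xy generate_gens by simp
  qed
qed

lemma coset_ball_eq_lcosets_or_card_ge:
  assumes H: "subgroup H G" and C: "C \<in> lcosets H"
  shows "coset_ball G T C k = lcosets H \<or> Suc k \<le> card (coset_ball G T C k)"
proof -
  have "(\<Union>k. coset_ball G T C k) = lcosets H"
    using coset_ball_subset_lcosets[OF gens_subset H C] lcosets_subset_UN_coset_ball[OF H C]
    by blast
  moreover have "coset_ball G T C k = (\<Union>m. coset_ball G T C m)
      \<or> Suc k \<le> card (coset_ball G T C k)"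
  proof (rule incseq_eq_Union_or_card_ge)
    show "incseq (coset_ball G T C)"
      by (simp add: incseq_def coset_ball_mono)
    show "finite (coset_ball G T C k)" for k
      using finite_gens by (rule finite_coset_ball)
    show "coset_ball G T C (Suc (Suc k)) = coset_ball G T C (Suc k)"
      if "coset_ball G T C (Suc k) = coset_ball G T C k" for k
      using that by (metis coset_ball.simps(2))
  qed simp
  ultimately show ?thesis
    by simp
qed

lemma prob_l_coset_close_inv_index:
  assumes H: "subgroup H G" and x: "x \<in> carrier G" and supp: "set_pmf \<mu> \<subseteq> carrier G"
    and small: "\<And>t. t \<in> T \<Longrightarrow> transl_dist G t \<mu> \<le> \<delta>" and "0 \<le> \<delta>"
  shows "\<bar>measure_pmf.prob \<mu> (x <# H) - inv_index G H\<bar> \<le> 1 / Suc r + r * \<delta>"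
proof -
  define B where "B = coset_ball G T (x <# H) r"
  have xH: "x <# H \<in> lcosets H"
    using x by (auto simp: LCOSETS_def)
  have B: "finite B" "B \<subseteq> lcosets H"
    unfolding B_def using finite_coset_ball[OF finite_gens] coset_ball_subset_lcosets[OF gens_subset H xH]
    by auto
  have close: "\<bar>measure_pmf.prob \<mu> D - measure_pmf.prob \<mu> (x <# H)\<bar> \<le> r * \<delta>" if "D \<in> B" for D
    using prob_coset_ball_close[OF gens_subset inv_gens_subset small \<open>0 \<le> \<delta>\<close>]
      l_coset_subset_G[OF subgroup.subset[OF H] x] that
    unfolding B_def by blast
  from coset_ball_eq_lcosets_or_card_ge[OF H xH, of r]
  show ?thesis
  proof
    assume "coset_ball G T (x <# H) r = lcosets H"
    then have "\<bar>measure_pmf.prob \<mu> (x <# H) - inv_index G H\<bar> \<le> r * \<delta>"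
      using inv_index_close_if_lcosets_close[OF H supp] B(1) close unfolding B_def by simp
    moreover have "0 \<le> 1 / real (Suc r)"
      by simp
    ultimately show ?thesis
      by linarith
  next
    assume "Suc r \<le> card (coset_ball G T (x <# H) r)"
    then show ?thesis
      using inv_index_close_if_many_lcosets_close[OF H B _ close] \<open>0 \<le> \<delta>\<close>
      unfolding B_def by simp
  qed
qed

lemma measures_index_uniformly_if_generators_almost_invariant:
  assumes supp: "\<And>n. set_pmf (\<mu> n) \<subseteq> carrier G"
    and inv: "\<And>t. t \<in> T \<Longrightarrow> (\<lambda>n. transl_dist G t (\<mu> n)) \<longlonglongrightarrow> 0"
  shows "measures_index_uniformly G \<mu>"
  unfolding measures_index_uniformly_def
proof (intro allI impI)
  fix \<epsilon> :: real assume "\<epsilon> > 0"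
  then obtain r \<delta> where "0 < \<delta>" and r\<delta>: "1 / Suc r + r * \<delta> < \<epsilon>"
    using ex_inverse_Suc_plus_mult_less by blast
  have "\<forall>\<^sub>F n in sequentially. \<forall>t\<in>T. transl_dist G t (\<mu> n) < \<delta>"
    using finite_gens inv \<open>0 < \<delta>\<close> by (intro eventually_ball_finite ballI) (auto dest: order_tendstoD(2))
  then obtain N where N: "\<And>n t. n \<ge> N \<Longrightarrow> t \<in> T \<Longrightarrow> transl_dist G t (\<mu> n) < \<delta>"
    unfolding eventually_sequentially by blast
  show "\<exists>N. \<forall>n\<ge>N. \<forall>x\<in>carrier G. \<forall>H. subgroup H G \<longrightarrow>
      \<bar>measure_pmf.prob (\<mu> n) (x <# H) - inv_index G H\<bar> < \<epsilon>"
  proof (intro exI allI impI ballI)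
    fix n x H assume "N \<le> n" "x \<in> carrier G" "subgroup H G"
    have "\<bar>measure_pmf.prob (\<mu> n) (x <# H) - inv_index G H\<bar> \<le> 1 / Suc r + r * \<delta>"
      using prob_l_coset_close_inv_index[OF \<open>subgroup H G\<close> \<open>x \<in> carrier G\<close> supp]
        N[OF \<open>N \<le> n\<close>] \<open>0 < \<delta>\<close> less_imp_le by blast
    then show "\<bar>measure_pmf.prob (\<mu> n) (x <# H) - inv_index G H\<bar> < \<epsilon>"
      using r\<delta> by linarith
  qed
qed

end

theorem theorem1p13:
  fixes G :: "('a, 'b) monoid_scheme" and \<mu> :: "nat \<Rightarrow> 'a pmf"
  assumes "fin_gen_group G"
    and "\<And>n. prob_on G (\<mu> n)"
    and "almost_invariant G \<mu>"
  shows "measures_index_uniformly G \<mu>"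
proof -
  obtain S where "group G" "finite S" "S \<subseteq> carrier G" "generate G S = carrier G"
    using assms(1) unfolding fin_gen_group_def by blast
  define T where "T = S \<union> m_inv G ` S"
  interpret finite_symmetric_generators G T
    unfolding T_def by (rule group.finite_symmetric_generators_symmetrize) fact+
  show ?thesis
  proof (rule measures_index_uniformly_if_generators_almost_invariant)
    show "set_pmf (\<mu> n) \<subseteq> carrier G" for n
      using assms(2) unfolding prob_on_def .
    show "(\<lambda>n. transl_dist G t (\<mu> n)) \<longlonglongrightarrow> 0" if "t \<in> T" for t
      using assms(3) that gens_subset unfolding almost_invariant_def by blast
  qed
qed

end
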